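(* Let $\mathcal F=(f_1,\dots,f_m)\colon\mathbb R^n\to\mathbb R^m$ be continuously differentiable with each $f_i$ convex, let $Q\subset\mathbb R^m$ be nonempty, closed and convex, $Q^+:=Q-\mathbb R^m_+$, and let $x^k\in\mathbb R^n$. Set $p^k:=P_{Q^+}(\mathcal F(x^k))$, $\rho^k:=\mathcal F(x^k)-p^k$, $Q^+_k:=\{y\in\mathbb R^m:\langle\rho^k,y-p^k\rangle\le0\}$ and $\delta_k(x):=\tfrac12\mathrm{dist}^2(\mathcal F(x),Q^+_k)$ (so $\delta_k\equiv0$ if $\rho^k=0$, and $\delta_k(x)=[\langle\rho^k,\mathcal F(x)-p^k\rangle]_+^2/(2\|\rho^k\|^2)$ if $\rho^k\ne0$). Then $\delta_k$ is convex on $\mathbb R^n$.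
   Context: $Q-\mathbb R^m_+:=\{y-u:y\in Q,u\in\mathbb R^m_+\}$; $P_{Q^+}$ is the Euclidean metric projection onto $Q^+$; $[t]_+:=\max(t,0)$.
   Formalization: A nearest point of $Q^+$ to $\mathcal F(x^k)$ is assumed to exist, so that $p^k=P_{Q^+}(\mathcal F(x^k))$ is defined. The statement above fails without it. *)

theory Defs
  imports "HOL-Analysis.Analysis"
begin

definition nonneg_orthant :: "(real^'m) set" where
  "nonneg_orthant = {u. \<forall>i. 0 \<le> u $ i}"

definition Qplus :: "(real^'m) set \<Rightarrow> (real^'m) set" where
  "Qplus Q = {y - u | y u. y \<in> Q \<and> u \<in> nonneg_orthant}"

end

theory Submission
  imports Defs
begin

(* Since Q^+ is invariant under subtracting nonnegative vectors, the residual \<rho>k of the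
   projection onto it is a nonnegative vector.  Hence g x := <\<rho>k, F x - pk> is a nonnegative
   combination of the convex components of F, so it is convex.  For \<rho>k \<noteq> 0 the distance to
   the half-space Qk is [g x]_+ / |\<rho>k|, and t \<mapsto> [t]_+^2 is convex and nondecreasing, so
   \<delta>k = [g]_+^2 / (2 |\<rho>k|^2) is convex. *)

lemma convex_on_max:
  assumes "convex_on S f" "convex_on S g"
  shows "convex_on S (\<lambda>x. max (f x) (g x))"
proof -
  have "max (f (u *\<^sub>R x + v *\<^sub>R y)) (g (u *\<^sub>R x + v *\<^sub>R y))
          \<le> u * max (f x) (g x) + v * max (f y) (g y)"
    if "x \<in> S" "y \<in> S" "0 \<le> u" "0 \<le> v" "u + v = 1" for x y u v
  proof -
    have "f (u *\<^sub>R x + v *\<^sub>R y) \<le> u * f x + v * f y"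
      "g (u *\<^sub>R x + v *\<^sub>R y) \<le> u * g x + v * g y"
      using assms that unfolding convex_on_def by blast+
    moreover have "u * f x + v * f y \<le> u * max (f x) (g x) + v * max (f y) (g y)"
      "u * g x + v * g y \<le> u * max (f x) (g x) + v * max (f y) (g y)"
      using that by (intro add_mono mult_left_mono; simp)+
    ultimately show ?thesis
      by (intro max.boundedI) linarith+
  qed
  with convex_on_imp_convex[OF assms(1)] show ?thesis
    unfolding convex_on_def by blast
qed

lemma convex_on_sum_fun:
  assumes "finite I" "convex S" "\<And>i. i \<in> I \<Longrightarrow> convex_on S (f i)"
  shows "convex_on S (\<lambda>x. \<Sum>i\<in>I. f i x)"
  using assms by (induction I rule: finite_induct) (auto simp: convex_on_const)

lemma convex_on_compose_mono:
  fixes g :: "real \<Rightarrow> real"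
  assumes f: "convex_on S f" and g: "convex_on UNIV g" "mono g"
  shows "convex_on S (\<lambda>x. g (f x))"
proof -
  have "g (f (u *\<^sub>R x + v *\<^sub>R y)) \<le> u * g (f x) + v * g (f y)"
    if "x \<in> S" "y \<in> S" "0 \<le> u" "0 \<le> v" "u + v = 1" for x y u v
  proof -
    have "g (f (u *\<^sub>R x + v *\<^sub>R y)) \<le> g (u * f x + v * f y)"
      using f that unfolding convex_on_def by (intro monoD[OF g(2)]) auto
    also have "\<dots> \<le> u * g (f x) + v * g (f y)"
      using g(1) that unfolding convex_on_def by simp
    finally show ?thesis .
  qed
  with convex_on_imp_convex[OF f] show ?thesis
    unfolding convex_on_def by blast
qed

lemma convex_on_pos_part_squared: "convex_on UNIV (\<lambda>t::real. (max 0 t)\<^sup>2)"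
proof -
  have pos_part: "convex_on UNIV (\<lambda>t::real. max 0 t)"
    by (intro convex_on_max) (simp_all add: convex_on_const convex_on_ident)
  have "convex_on UNIV (\<lambda>t::real. max 0 t * max 0 t)"
    by (rule convex_on_mul[OF pos_part pos_part]) (auto intro: mono_onI)
  then show ?thesis
    by (simp add: power2_eq_square)
qed

lemma mono_pos_part_squared: "mono (\<lambda>t::real. (max 0 t)\<^sup>2)"
  by (intro monoI power_mono) auto

lemma convex_on_inner_nonneg_left:
  fixes F :: "'a::real_vector \<Rightarrow> real^'m"
  assumes "convex S" "\<And>i. 0 \<le> a $ i" "\<And>i. convex_on S (\<lambda>x. F x $ i)"
  shows "convex_on S (\<lambda>x. inner a (F x))"
  unfolding inner_vec_def inner_real_def
  using assms by (intro convex_on_sum_fun) (auto simp: mult.commute[of _ "a $ _"])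

lemma infdist_halfspace:
  fixes a z :: "'a::real_inner"
  assumes "a \<noteq> 0"
  shows "infdist z {y. inner a y \<le> b} = max 0 (inner a z - b) / norm a"
proof (cases "inner a z \<le> b")
  case True
  then show ?thesis by simp
next
  case False
  define H where "H = {y. inner a y \<le> b}"
  define s where "s = inner a z - b"
  have s: "s > 0" using False by (simp add: s_def)
  have a: "norm a > 0" using assms by simp
  define w where "w = z - (s / (norm a)\<^sup>2) *\<^sub>R a"
  have "w \<in> H"
    using a by (simp add: H_def w_def s_def inner_diff_right dot_square_norm)
  moreover have "dist z w = s / norm a"
    using a s by (simp add: w_def dist_norm power2_eq_square)
  ultimately have upper: "infdist z H \<le> s / norm a"
    by (metis infdist_le)
  have "s / norm a \<le> dist z y" if "y \<in> H" for y
  proof -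
    have "s \<le> inner a (z - y)"
      using that by (simp add: H_def s_def inner_diff_right)
    also have "\<dots> \<le> norm a * dist z y"
      using Cauchy_Schwarz_ineq2[of a "z - y"] by (simp add: dist_norm)
    finally show ?thesis
      using a by (simp add: divide_le_eq mult.commute)
  qed
  moreover have "H \<noteq> {}"
    using \<open>w \<in> H\<close> by blast
  ultimately have "s / norm a \<le> infdist z H"
    by (simp add: infdist_notempty cINF_greatest)
  with upper s show ?thesis
    by (simp add: H_def s_def)
qed

lemma Qplus_diff_nonneg_orthant:
  assumes "p \<in> Qplus Q" "u \<in> nonneg_orthant"
  shows "p - u \<in> Qplus Q"
proof -
  obtain y u' where "p = y - u'" "y \<in> Q" "u' \<in> nonneg_orthant"
    using assms(1) unfolding Qplus_def by blast
  moreover have "u' + u \<in> nonneg_orthant"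
    using assms(2) \<open>u' \<in> nonneg_orthant\<close> by (simp add: nonneg_orthant_def)
  ultimately show ?thesis
    unfolding Qplus_def by (auto intro!: exI[of _ y] exI[of _ "u' + u"] simp: algebra_simps)
qed

lemma nearest_point_residual_nonneg:
  fixes z p :: "real^'m"
  assumes nearest: "\<And>y. y \<in> S \<Longrightarrow> dist z p \<le> dist z y"
    and downward_closed: "\<And>u. u \<in> nonneg_orthant \<Longrightarrow> p - u \<in> S"
  shows "0 \<le> (z - p) $ i"
proof (rule ccontr)
  define r where "r = z - p"
  assume "\<not> 0 \<le> (z - p) $ i"
  then have neg: "r $ i < 0" by (simp add: r_def)
  \<comment> \<open>moving p by -r_i along the i-th axis would get strictly closer to z\<close>
  define t where "t = - r $ i"
  have step: "t *\<^sub>R axis i 1 \<in> nonneg_orthant"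
    using neg by (simp add: t_def nonneg_orthant_def axis_def)
  have "norm r \<le> norm (r + t *\<^sub>R axis i 1)"
    using nearest[OF downward_closed[OF step]] by (simp add: r_def dist_norm algebra_simps)
  then have "(norm r)\<^sup>2 \<le> (norm (r + t *\<^sub>R axis i 1))\<^sup>2"
    by (intro power_mono) auto
  also have "\<dots> = (norm r)\<^sup>2 + 2 * t * r $ i + t\<^sup>2"
    unfolding power2_norm_eq_inner
    by (simp add: inner_axis inner_axis' inner_commute
        power2_eq_square algebra_simps)
  also have "\<dots> = (norm r)\<^sup>2 - (r $ i)\<^sup>2"
    by (simp add: t_def power2_eq_square)
  finally show False
    using neg by simp
qed

theorem lemma5:
  fixes F :: "real^'n \<Rightarrow> real^'m"
    and F' :: "real^'n \<Rightarrow> ((real^'n) \<Rightarrow>\<^sub>L (real^'m))"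
    and Q :: "(real^'m) set"
    and xk :: "real^'n"
    and pk \<rho>k :: "real^'m"
    and Qk :: "(real^'m) set"
    and \<delta>k :: "real^'n \<Rightarrow> real"
  assumes F_deriv: "\<And>x. (F has_derivative blinfun_apply (F' x)) (at x)"
    and F'_cont: "continuous_on UNIV F'"
    and F_conv: "\<And>i. convex_on UNIV (\<lambda>x. F x $ i)"
    and Q_ne: "Q \<noteq> {}" and Q_closed: "closed Q" and Q_convex: "convex Q"
    and proj_exists: "\<exists>p\<in>Qplus Q. \<forall>z\<in>Qplus Q. dist (F xk) p \<le> dist (F xk) z"
    and pk_def: "pk = closest_point (Qplus Q) (F xk)"
    and \<rho>k_def: "\<rho>k = F xk - pk"
    and Qk_def: "Qk = {y. inner \<rho>k (y - pk) \<le> 0}"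
    and \<delta>k_def: "\<delta>k = (\<lambda>x. (1/2) * (infdist (F x) Qk)\<^sup>2)"
  shows "convex_on UNIV \<delta>k"
proof -
  have pk_nearest: "pk \<in> Qplus Q" "\<And>z. z \<in> Qplus Q \<Longrightarrow> dist (F xk) pk \<le> dist (F xk) z"
    using someI_ex[OF proj_exists[unfolded Bex_def]] unfolding pk_def closest_point_def
    by blast+
  have \<rho>k_nonneg: "0 \<le> \<rho>k $ i" for i
    unfolding \<rho>k_def using pk_nearest(2) Qplus_diff_nonneg_orthant[OF pk_nearest(1)]
    by (rule nearest_point_residual_nonneg)
  show ?thesis
  proof (cases "\<rho>k = 0")
    case True
    then have "\<delta>k = (\<lambda>x. 0)"
      by (simp add: \<delta>k_def Qk_def)
    then show ?thesis
      by (simp add: convex_on_const)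
  next
    case False
    have "Qk = {y. inner \<rho>k y \<le> inner \<rho>k pk}"
      by (auto simp: Qk_def inner_diff_right)
    then have \<delta>k_eq: "\<delta>k =
        (\<lambda>x. 1 / (2 * (norm \<rho>k)\<^sup>2) * (max 0 (inner \<rho>k (F x) - inner \<rho>k pk))\<^sup>2)"
      by (simp add: \<delta>k_def infdist_halfspace[OF False] power_divide fun_eq_iff)
    have "convex_on UNIV (\<lambda>x. inner \<rho>k (F x) - inner \<rho>k pk)"
      by (intro convex_on_diff convex_on_inner_nonneg_left \<rho>k_nonneg F_conv)
        (simp_all add: concave_on_const)
    then have "convex_on UNIV (\<lambda>x. (max 0 (inner \<rho>k (F x) - inner \<rho>k pk))\<^sup>2)"
      by (rule convex_on_compose_mono[OF _ convex_on_pos_part_squared mono_pos_part_squared])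
    then show ?thesis
      unfolding \<delta>k_eq by (rule convex_on_cmul[rotated]) simp
  qed
qed

end
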